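(* Let $K$ be a field, $c\in K\setminus\{0\}$, $n\ge1$, and let $f$ be a $c$-frieze of order $n$ over $K$. For every even $k$ with $-1\le k\le n+2$, the sequence $(f(i,i+k-1))_{i\in\mathbb{Z}}$ (row $k$) is periodic with (least) period a divisor of $n+3$. If $n$ is even, then for every odd $k$ with $-1\le k\le n+2$, row $k$ is periodic with (least) period a divisor of $2n+6$.
   Context: The $c$-continuant polynomials $P_k=P_k^c$ ($k\ge-1$) are defined by $P_{-1}=0$, $P_0=1$, and for $k\ge1$, $P_k(x_1,\dots,x_k)=x_kP_{k-1}(x_1,\dots,x_{k-1})+cP_{k-2}(x_1,\dots,x_{k-2})$. A family $(x_i)_{i\in\mathbb{Z}}$ in $K$ is $n$-admissible if $P_{n+2}(x_i,\dots,x_{i+n+1})=0$ for all $i$. Let $\mathbb{B}_n=\{(i,j)\in\mathbb{Z}^2:-2\le j-i\le n+1\}$. A $c$-frieze of order $n$ is a function $f:\mathbb{B}_n\to K$ for which there is an $n$-admissible family $(x_i)$ with $f(i,j)=P_{j-i+1}(x_i,\dots,x_j)$ for all $(i,j)\in\mathbb{B}_n$. Row $k$ of $f$ is the sequence $(f(i,i+k-1))_{i\in\mathbb{Z}}$; it is periodic of period $p$ if $f(i+p,i+k-1+p)=f(i,i+k-1)$ for all $i$ and $p$ is the least positive integer with this property. *)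

theory Defs
  imports Main
begin

text \<open>c-continuant polynomials. cont c x k = P_k(x 1, ..., x k) for k \<ge> 0,
  with P_0 = 1, P_1 = x_1 * P_0 + c * P_{-1} = x_1 (P_{-1} = 0), and
  P_k = x_k P_{k-1} + c P_{k-2}.\<close>
fun cont :: "'a::field \<Rightarrow> (nat \<Rightarrow> 'a) \<Rightarrow> nat \<Rightarrow> 'a" where
  "cont c x 0 = 1"
| "cont c x (Suc 0) = x 1 * 1 + c * 0"
| "cont c x (Suc (Suc k)) = x (Suc (Suc k)) * cont c x (Suc k) + c * cont c x k"

definition Pc :: "'a::field \<Rightarrow> int \<Rightarrow> (nat \<Rightarrow> 'a) \<Rightarrow> 'a" where
  "Pc c k x = (if k < 0 then 0 else cont c x (nat k))"

definition Pfam :: "'a::field \<Rightarrow> int \<Rightarrow> (int \<Rightarrow> 'a) \<Rightarrow> int \<Rightarrow> 'a" where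
  "Pfam c k x i = Pc c k (\<lambda>m. x (i + int m - 1))"

definition admissible :: "'a::field \<Rightarrow> nat \<Rightarrow> (int \<Rightarrow> 'a) \<Rightarrow> bool" where
  "admissible c n x \<longleftrightarrow> (\<forall>i. Pfam c (int n + 2) x i = 0)"

definition frieze_domain :: "nat \<Rightarrow> (int \<times> int) set" where
  "frieze_domain n = {(i, j). -2 \<le> j - i \<and> j - i \<le> int n + 1}"

text \<open>A c-frieze of order n; values outside the domain B_n are irrelevant.\<close>
definition is_frieze :: "'a::field \<Rightarrow> nat \<Rightarrow> (int \<times> int \<Rightarrow> 'a) \<Rightarrow> bool" where
  "is_frieze c n f \<longleftrightarrow> (\<exists>x. admissible c n x \<and>
     (\<forall>(i, j) \<in> frieze_domain n. f (i, j) = Pfam c (j - i + 1) x i))"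

definition frieze_row :: "(int \<times> int \<Rightarrow> 'a) \<Rightarrow> int \<Rightarrow> int \<Rightarrow> 'a" where
  "frieze_row f k i = f (i, i + k - 1)"

definition has_period :: "(int \<Rightarrow> 'a) \<Rightarrow> nat \<Rightarrow> bool" where
  "has_period r p \<longleftrightarrow> (\<forall>i. r (i + int p) = r i)"

definition least_period :: "(int \<Rightarrow> 'a) \<Rightarrow> nat \<Rightarrow> bool" where
  "least_period r p \<longleftrightarrow> p > 0 \<and> has_period r p \<and> (\<forall>q. 0 < q \<and> q < p \<longrightarrow> \<not> has_period r q)"

end

theory Submission
  imports Defs
begin

text \<open>
  Let \<open>Q i t = P_t(x_i, ..., x_{i+t-1})\<close>, so that row \<open>t\<close> of the frieze is
  \<open>i \<mapsto> Q i t\<close>. Expanding continuants from both ends, the vanishing of the bottom row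
  \<open>Q i (n+2)\<close> yields the glide relation \<open>Q i t * (-c)^d = Q i (n+1) * Q (i+t+1) d\<close>
  for \<open>t + d = n + 1\<close>. In particular \<open>Q i (n+1) * Q (i+1) (n+1) = (-c)^(n+1)\<close>, so the top
  row is nowhere zero and 2-periodic. Applying the glide relation twice translates row \<open>k\<close>
  by \<open>n + 3\<close> at the cost of the factor \<open>Q i (n+1) * Q (i+k+1) (n+1) / (-c)^(n+1)\<close>. For even
  \<open>k\<close> the two top-row entries are consecutive and the factor is 1; for odd \<open>k\<close> it is
  \<open>Q i (n+1)^2 / (-c)^(n+1)\<close>, and when \<open>n\<close> is even a second translation picks up its
  reciprocal.
\<close>

definition cont_seg :: "'a::field \<Rightarrow> (int \<Rightarrow> 'a) \<Rightarrow> int \<Rightarrow> nat \<Rightarrow> 'a" where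
  "cont_seg c x i t = cont c (\<lambda>m. x (i + int m - 1)) t"

lemma cont_seg_0 [simp]: "cont_seg c x i 0 = 1"
  by (simp add: cont_seg_def)

lemma cont_seg_1 [simp]: "cont_seg c x i (Suc 0) = x i"
  by (simp add: cont_seg_def)

lemma cont_seg_Suc_Suc:
  "cont_seg c x i (Suc (Suc t)) = x (i + int t + 1) * cont_seg c x i (Suc t) + c * cont_seg c x i t"
  by (simp add: cont_seg_def algebra_simps)

lemma cont_seg_Suc_Suc_left:
  "cont_seg c x i (Suc (Suc t)) = x i * cont_seg c x (i + 1) (Suc t) + c * cont_seg c x (i + 2) t"
proof (induction t arbitrary: i rule: induct_nat_012)
  case 0
  show ?case by (simp add: cont_seg_Suc_Suc mult.commute)
next
  case 1
  show ?case by (simp add: cont_seg_Suc_Suc algebra_simps)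
next
  case (ge2 t)
  have "cont_seg c x i (Suc (Suc (Suc (Suc t))))
      = x (i + int t + 3) * cont_seg c x i (Suc (Suc (Suc t))) + c * cont_seg c x i (Suc (Suc t))"
    using cont_seg_Suc_Suc[of c x i "Suc (Suc t)"] by (simp add: algebra_simps)
  also have "\<dots> = x i * (x (i + int t + 3) * cont_seg c x (i + 1) (Suc (Suc t)) + c * cont_seg c x (i + 1) (Suc t))
      + c * (x (i + int t + 3) * cont_seg c x (i + 2) (Suc t) + c * cont_seg c x (i + 2) t)"
    unfolding ge2.IH by (simp add: algebra_simps)
  also have "\<dots> = x i * cont_seg c x (i + 1) (Suc (Suc (Suc t))) + c * cont_seg c x (i + 2) (Suc (Suc t))"
    using cont_seg_Suc_Suc[of c x "i + 1" "Suc t"] cont_seg_Suc_Suc[of c x "i + 2" t]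
    by (simp add: algebra_simps)
  finally show ?case .
qed

locale admissible_cont =
  fixes c :: "'a::field" and x :: "int \<Rightarrow> 'a" and n :: nat
  assumes cont_seg_vanishes: "\<And>i. cont_seg c x i (n + 2) = 0"
begin

lemma cont_seg_glide:
  "t + d = n + 1 \<Longrightarrow> cont_seg c x i t * (-c) ^ d = cont_seg c x i (n + 1) * cont_seg c x (i + int t + 1) d"
proof (induction d arbitrary: t rule: induct_nat_012)
  case 0
  then show ?case by simp
next
  case 1
  then have "t = n" by simp
  moreover have "x (i + int n + 1) * cont_seg c x i (n + 1) + c * cont_seg c x i n = 0"
    using cont_seg_vanishes[of i] by (simp add: cont_seg_Suc_Suc)
  ultimately show ?case by (simp add: algebra_simps neg_eq_iff_add_eq_0)
next
  case (ge2 d)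
  let ?T = "cont_seg c x i (n + 1)"
  have IH1: "cont_seg c x i (Suc (Suc t)) * (-c) ^ d = ?T * cont_seg c x (i + int t + 3) d"
    using ge2.IH(1)[of "Suc (Suc t)"] ge2.prems by (simp add: algebra_simps)
  have IH2: "cont_seg c x i (Suc t) * (-c) ^ Suc d = ?T * cont_seg c x (i + int t + 2) (Suc d)"
    using ge2.IH(2)[of "Suc t"] ge2.prems by (simp add: algebra_simps)
  have "?T * cont_seg c x (i + int t + 1) (Suc (Suc d))
      = x (i + int t + 1) * (?T * cont_seg c x (i + int t + 2) (Suc d)) + c * (?T * cont_seg c x (i + int t + 3) d)"
    using cont_seg_Suc_Suc_left[of c x "i + int t + 1" d] by (simp add: algebra_simps)
  also have "\<dots> = x (i + int t + 1) * cont_seg c x i (Suc t) * (-c) ^ Suc d + c * cont_seg c x i (Suc (Suc t)) * (-c) ^ d"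
    by (simp only: IH1 IH2 mult.assoc)
  also have "\<dots> = cont_seg c x i t * (-c) ^ Suc (Suc d)"
    by (simp add: cont_seg_Suc_Suc algebra_simps)
  finally show ?case by simp
qed

lemma cont_seg_top_mult_next:
  "cont_seg c x i (n + 1) * cont_seg c x (i + 1) (n + 1) = (-c) ^ (n + 1)"
  using cont_seg_glide[of 0 "n + 1" i] by simp

lemma cont_seg_translate:
  assumes "k \<le> n + 1"
  shows "cont_seg c x i k * (-c) ^ (n + 1)
    = cont_seg c x i (n + 1) * cont_seg c x (i + int k + 1) (n + 1) * cont_seg c x (i + int n + 3) k"
proof -
  have "cont_seg c x i k * (-c) ^ (n + 1) = cont_seg c x i k * (-c) ^ (n + 1 - k) * (-c) ^ k"
    using assms by (metis le_add_diff_inverse2 mult.assoc power_add)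
  also have "\<dots> = cont_seg c x i (n + 1) * (cont_seg c x (i + int k + 1) (n + 1 - k) * (-c) ^ k)"
    using cont_seg_glide[of k "n + 1 - k" i] assms by simp
  also have "\<dots> = cont_seg c x i (n + 1) * cont_seg c x (i + int k + 1) (n + 1) * cont_seg c x (i + int n + 3) k"
    using cont_seg_glide[of "n + 1 - k" k "i + int k + 1"] assms by (simp add: of_nat_diff algebra_simps)
  finally show ?thesis .
qed

end

locale nondegenerate_admissible_cont = admissible_cont +
  assumes c_nonzero: "c \<noteq> 0"
begin

lemma cont_seg_top_nonzero: "cont_seg c x i (n + 1) \<noteq> 0"
  using cont_seg_top_mult_next[of i] c_nonzero by auto

lemma cont_seg_top_2periodic: "cont_seg c x (i + 2 * int t) (n + 1) = cont_seg c x i (n + 1)"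
proof (induction t)
  case 0
  show ?case by simp
next
  case (Suc t)
  let ?j = "i + 2 * int t"
  have "cont_seg c x ?j (n + 1) * cont_seg c x (?j + 1) (n + 1)
      = cont_seg c x (?j + 1) (n + 1) * cont_seg c x (?j + 2) (n + 1)"
    using cont_seg_top_mult_next[of ?j] cont_seg_top_mult_next[of "?j + 1"] by (simp add: add.assoc)
  then have "cont_seg c x (?j + 2) (n + 1) = cont_seg c x ?j (n + 1)"
    using cont_seg_top_nonzero[of "?j + 1"] by simp
  then show ?case using Suc.IH by (simp add: algebra_simps)
qed

lemma cont_seg_shift_even:
  assumes "k \<le> n + 1" "even k"
  shows "cont_seg c x (i + int n + 3) k = cont_seg c x i k"
proof -
  obtain t where "k = 2 * t" using \<open>even k\<close> by blast
  then have "cont_seg c x (i + int k + 1) (n + 1) = cont_seg c x (i + 1) (n + 1)"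
    using cont_seg_top_2periodic[of "i + 1" t] by (simp add: algebra_simps)
  then have "cont_seg c x i k * (-c) ^ (n + 1) = (-c) ^ (n + 1) * cont_seg c x (i + int n + 3) k"
    using cont_seg_translate[OF assms(1), of i] cont_seg_top_mult_next[of i] by simp
  then show ?thesis using c_nonzero by (simp add: mult.commute)
qed

lemma cont_seg_translate_odd:
  assumes "k \<le> n + 1" "odd k"
  shows "cont_seg c x i k * (-c) ^ (n + 1) = cont_seg c x i (n + 1) ^ 2 * cont_seg c x (i + int n + 3) k"
proof -
  obtain t where "k = 2 * t + 1" using \<open>odd k\<close> by (blast elim: oddE)
  then have "cont_seg c x (i + int k + 1) (n + 1) = cont_seg c x i (n + 1)"
    using cont_seg_top_2periodic[of i "t + 1"] by (simp add: algebra_simps)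
  then show ?thesis using cont_seg_translate[OF assms(1), of i] by (simp add: power2_eq_square)
qed

lemma cont_seg_shift_odd:
  assumes "k \<le> n + 1" "odd k" "even n"
  shows "cont_seg c x (i + 2 * int n + 6) k = cont_seg c x i k"
proof -
  let ?j = "i + int n + 3"
  obtain t where "n = 2 * t" using \<open>even n\<close> by blast
  then have top: "cont_seg c x ?j (n + 1) = cont_seg c x (i + 1) (n + 1)"
    using cont_seg_top_2periodic[of "i + 1" "t + 1"] by (simp add: algebra_simps)
  have "cont_seg c x i k * (-c) ^ (n + 1) * (-c) ^ (n + 1)
      = cont_seg c x i (n + 1) ^ 2 * (cont_seg c x ?j k * (-c) ^ (n + 1))"
    using cont_seg_translate_odd[OF assms(1,2), of i] by simp
  also have "\<dots> = (cont_seg c x i (n + 1) * cont_seg c x (i + 1) (n + 1)) ^ 2 * cont_seg c x (i + 2 * int n + 6) k"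
    using cont_seg_translate_odd[OF assms(1,2), of ?j] top by (simp add: algebra_simps)
  also have "\<dots> = (-c) ^ (n + 1) * (-c) ^ (n + 1) * cont_seg c x (i + 2 * int n + 6) k"
    by (simp only: cont_seg_top_mult_next power2_eq_square)
  finally show ?thesis using c_nonzero by simp
qed

end

lemma has_period_mult: "has_period r p \<Longrightarrow> has_period r (p * t)"
proof (induction t)
  case 0
  show ?case by (simp add: has_period_def)
next
  case (Suc t)
  then show ?case unfolding has_period_def by (metis add.assoc mult_Suc_right of_nat_add)
qed

lemma has_period_imp_least_period_dvd:
  assumes "has_period r N" "N > 0"
  shows "\<exists>p. least_period r p \<and> p dvd N"
proof -
  define p where "p = (LEAST p. 0 < p \<and> has_period r p)"
  have p: "0 < p \<and> has_period r p"
    unfolding p_def by (rule LeastI[of _ N]) (use assms in simp)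
  have below: "\<not> has_period r q" if "0 < q" "q < p" for q
    using not_less_Least[of q "\<lambda>p. 0 < p \<and> has_period r p"] that unfolding p_def by blast
  have "has_period r (N mod p)" unfolding has_period_def
  proof
    fix i
    have "r (i + int (N mod p)) = r (i + int (N mod p) + int (p * (N div p)))"
      using has_period_mult[of r p "N div p"] p unfolding has_period_def by simp
    also have "\<dots> = r (i + int N)"
      by (metis add.assoc mod_mult_div_eq of_nat_add)
    finally show "r (i + int (N mod p)) = r i"
      using assms(1) unfolding has_period_def by simp
  qed
  then have "p dvd N"
    using below[of "N mod p"] p by (auto simp: dvd_eq_mod_eq_0)
  then show ?thesis
    using p below unfolding least_period_def by blast
qed

lemma Pfam_eq_cont_seg: "0 \<le> k \<Longrightarrow> Pfam c k x i = cont_seg c x i (nat k)"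
  by (simp add: Pfam_def Pc_def cont_seg_def)

lemma admissible_iff_cont_seg: "admissible c n x \<longleftrightarrow> (\<forall>i. cont_seg c x i (n + 2) = 0)"
  by (simp add: admissible_def Pfam_eq_cont_seg nat_add_distrib)

lemma has_period_frieze_row:
  assumes f: "\<forall>(i, j) \<in> frieze_domain n. f (i, j) = Pfam c (j - i + 1) x i"
    and adm: "admissible c n x" and k: "-1 \<le> k" "k \<le> int n + 2"
    and shift: "\<And>i t. int t = k \<Longrightarrow> t \<le> n + 1 \<Longrightarrow> cont_seg c x (i + int p) t = cont_seg c x i t"
  shows "has_period (frieze_row f k) p"
proof -
  have row: "frieze_row f k i = (if k < 0 then 0 else cont_seg c x i (nat k))" for i
  proof -
    have "(i, i + k - 1) \<in> frieze_domain n"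
      using k by (simp add: frieze_domain_def)
    then show ?thesis
      using f k unfolding frieze_row_def by (auto simp: Pfam_def Pc_def cont_seg_def)
  qed
  consider "k = -1" | "k = int n + 2" | "0 \<le> k" "k \<le> int n + 1"
    using k by linarith
  then show ?thesis
  proof cases
    case 1
    then show ?thesis unfolding has_period_def row by simp
  next
    case 2
    then show ?thesis
      using adm unfolding has_period_def admissible_iff_cont_seg row by (simp add: nat_add_distrib)
  next
    case 3
    then have "int (nat k) = k" "nat k \<le> n + 1" by auto
    then show ?thesis
      using 3 shift[of "nat k"] by (simp add: has_period_def row add.assoc)
  qed
qed

theorem mainTheorem11:
  fixes c :: "'a::field" and n :: nat and f :: "int \<times> int \<Rightarrow> 'a"
  assumes "c \<noteq> 0" and "n \<ge> 1" and "is_frieze c n f"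
  shows "(\<forall>k. even k \<and> -1 \<le> k \<and> k \<le> int n + 2 \<longrightarrow>
            (\<exists>p. least_period (frieze_row f k) p \<and> p dvd n + 3))
       \<and> (even n \<longrightarrow> (\<forall>k. odd k \<and> -1 \<le> k \<and> k \<le> int n + 2 \<longrightarrow>
            (\<exists>p. least_period (frieze_row f k) p \<and> p dvd 2 * n + 6)))"
proof -
  obtain x where adm: "admissible c n x"
    and f: "\<forall>(i, j) \<in> frieze_domain n. f (i, j) = Pfam c (j - i + 1) x i"
    using assms(3) unfolding is_frieze_def by blast
  interpret nondegenerate_admissible_cont c x n
    using adm assms(1) by unfold_locales (simp_all add: admissible_iff_cont_seg)
  have even_row: "\<exists>p. least_period (frieze_row f k) p \<and> p dvd n + 3"
    if k: "even k" "-1 \<le> k" "k \<le> int n + 2" for k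
  proof -
    have "has_period (frieze_row f k) (n + 3)"
      using f adm k(2,3) by (rule has_period_frieze_row)
        (use k(1) cont_seg_shift_even in \<open>auto simp: add.assoc\<close>)
    then show ?thesis by (rule has_period_imp_least_period_dvd) simp
  qed
  have odd_row: "\<exists>p. least_period (frieze_row f k) p \<and> p dvd 2 * n + 6"
    if k: "odd k" "-1 \<le> k" "k \<le> int n + 2" and "even n" for k
  proof -
    have "has_period (frieze_row f k) (2 * n + 6)"
      using f adm k(2,3) by (rule has_period_frieze_row)
        (use k(1) \<open>even n\<close> cont_seg_shift_odd in \<open>auto simp: add.assoc\<close>)
    then show ?thesis by (rule has_period_imp_least_period_dvd) simp
  qed
  show ?thesis using even_row odd_row by blast
qed

end
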